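(* For all $k,\ell\in\mathbb N$, \[ xC_{k+\ell+1}=\frac{(xC_\ell)\star(xC_ky)-(xC_ky)\star(xC_\ell)}{q-q^{-1}},\qquad C_{k+\ell+1}y=\frac{(xC_ky)\star(C_\ell y)-(C_\ell y)\star(xC_ky)}{q-q^{-1}}, \] where $xC_m$, $C_my$, $xC_my$ denote free (concatenation) products in $\mathbb V$.
   Context: $\mathbb F$ is a field of characteristic zero and $q\in\mathbb F$ is nonzero and not a root of unity; $[n]_q=(q^n-q^{-n})/(q-q^{-1})$. $\mathbb V$ is the free algebra on noncommuting letters $x,y$; a word is a product of letters (the empty word is $1$), and words form a basis. The $q$-shuffle product $\star$ on $\mathbb V$ is the bilinear product with $1\star v=v\star 1=v$ and, for nontrivial words $u=u_1\cdots u_r$, $v=v_1\cdots v_s$ (letters $u_i,v_j$), $u\star v=u_1\bigl((u_2\cdots u_r)\star v\bigr)+v_1\bigl(u\star(v_2\cdots v_s)\bigr)q^{(u_1,v_1)+(u_2,v_1)+\cdots+(u_r,v_1)}$, where juxtaposition is concatenation and $(x,x)=(y,y)=2$, $(x,y)=(y,x)=-2$. Set $\overline x=1$, $\overline y=-1$. A word $u_1\cdots u_n$ is Catalan if $\overline u_1+\cdots+\overline u_i\ge0$ for $1\le i\le n-1$ and $=0$ for $i=n$. For $n\in\mathbb N$, $C_n=\sum u_1u_2\cdots u_{2n}\,[1]_q[1+\overline u_1]_q[1+\overline u_1+\overline u_2]_q\cdots[1+\overline u_1+\cdots+\overline u_{2n}]_q$, summed over all Catalan words of length $2n$ (so $C_0=1$).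 *)

theory Defs
  imports Complex_Main
begin

text \<open>Letters of the free algebra V; words are lists of letters.
 Elements of V are represented as coefficient functions word => field
 (all elements considered here are finitely supported).\<close>

datatype letter = X | Y

type_synonym 'a vec = "letter list \<Rightarrow> 'a"

definition wd :: "letter list \<Rightarrow> 'a::field vec" where
  "wd u = (\<lambda>w. if w = u then 1 else 0)"

definition supp :: "'a::field vec \<Rightarrow> letter list set" where
  "supp f = {w. f w \<noteq> 0}"

definition conc :: "'a::field vec \<Rightarrow> 'a vec \<Rightarrow> 'a vec" where
  "conc f g = (\<lambda>w. \<Sum>i\<le>length w. f (take i w) * g (drop i w))"

definition prep :: "letter \<Rightarrow> 'a::field vec \<Rightarrow> 'a vec" where
  "prep a F = (\<lambda>w. case w of [] \<Rightarrow> 0 | c # w' \<Rightarrow> if c = a then F w' else 0)"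

definition bform :: "letter \<Rightarrow> letter \<Rightarrow> int" where
  "bform a b = (if a = b then 2 else -2)"

fun qsh :: "'a::field \<Rightarrow> letter list \<Rightarrow> letter list \<Rightarrow> 'a vec" where
  "qsh q [] v = wd v"
| "qsh q u [] = wd u"
| "qsh q (a # u) (b # v) =
     (\<lambda>w. prep a (qsh q u (b # v)) w
        + prep b (qsh q (a # u) v) w * q powi (\<Sum>c\<leftarrow>a # u. bform c b))"

definition star :: "'a::field \<Rightarrow> 'a vec \<Rightarrow> 'a vec \<Rightarrow> 'a vec" where
  "star q f g = (\<lambda>w. \<Sum>u\<in>supp f. \<Sum>v\<in>supp g. f u * g v * qsh q u v w)"

definition qint :: "'a::field \<Rightarrow> int \<Rightarrow> 'a" where
  "qint q n = (q powi n - q powi (-n)) / (q - inverse q)"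

definition bar :: "letter \<Rightarrow> int" where
  "bar a = (if a = X then 1 else -1)"

definition catalan :: "letter list \<Rightarrow> bool" where
  "catalan w \<longleftrightarrow>
     (\<forall>i. 1 \<le> i \<and> i \<le> length w - 1 \<longrightarrow> (\<Sum>j<i. bar (w ! j)) \<ge> 0)
     \<and> (\<Sum>j<length w. bar (w ! j)) = 0"

definition Cat :: "'a::field \<Rightarrow> nat \<Rightarrow> 'a vec" where
  "Cat q n = (\<lambda>w. if catalan w \<and> length w = 2 * n
       then (\<Prod>i\<le>2 * n. qint q (1 + (\<Sum>j<i. bar (w ! j)))) else 0)"

end

theory Submission
  imports Defs
begin

(* Write c = q - q^-1 and [A, B] = A * B - B * A for the q-shuffle product.
   The q-shuffle product obeys a Leibniz rule for removing the first letter of a word, so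
   associativity and every identity below can be proved letter by letter. The elements C_n,
   C_n y, x C_n and x C_n y are sums over weighted lattice paths, and the q-commutators of x and
   of y with such path sums can be computed explicitly. This yields
     [x, x C_k y] = c x C_(k+1),  [x C_k y, y] = c C_(k+1) y,
     [x C_l, xy] = c x C_(l+1),   [xy, C_l y] = c C_(l+1) y,   [xy, x C_k y] = 0.
   Both identities of the theorem then follow by induction on l with the Jacobi identity, e.g.
   [x C_(l+1), x C_k y] = c^-1 [[x C_l, xy], x C_k y] = c^-1 [[x C_l, x C_k y], xy],
   because xy commutes with x C_k y. *)

definition height :: "letter list \<Rightarrow> int" where
  "height w = sum_list (map bar w)"

lemma height_Nil [simp]: "height [] = 0"
  and height_Cons [simp]: "height (a # w) = bar a + height w"
  by (simp_all add: height_def)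

lemma bar_X [simp]: "bar X = 1" and bar_Y [simp]: "bar Y = -1"
  by (simp_all add: bar_def)

definition lderiv :: "letter \<Rightarrow> 'a::field vec \<Rightarrow> 'a vec" where
  "lderiv a f = (\<lambda>w. f (a # w))"

lemma lderiv_apply: "lderiv a f w = f (a # w)"
  by (simp add: lderiv_def)

lemma finite_words_of_length: "finite {w :: letter list. length w = n}"
proof -
  have letters: "(UNIV :: letter set) = {X, Y}"
    using letter.exhaust by auto
  have "finite {w. set w \<subseteq> (UNIV :: letter set) \<and> length w = n}"
    by (intro finite_lists_length_eq) (simp add: letters)
  then show ?thesis by simp
qed

lemma sum_bform: "(\<Sum>c\<leftarrow>u. bform c b) = 2 * bar b * height u"
proof -
  have "bform c b = 2 * bar c * bar b" for c
    by (cases c; cases b) (simp_all add: bform_def)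
  then show ?thesis by (induction u) (simp_all add: algebra_simps)
qed

lemma qsh_Nil_right [simp]: "qsh q u [] = wd u"
  by (cases u) simp_all

lemma qsh_apply_Nil: "qsh q u v [] = (if u = [] \<and> v = [] then 1 else 0)"
  by (cases u; cases v) (simp_all add: wd_def prep_def)

lemma qsh_apply_Cons:
  "qsh q u v (a # w) =
     (case u of [] \<Rightarrow> 0 | b # u' \<Rightarrow> if b = a then qsh q u' v w else 0)
   + (case v of [] \<Rightarrow> 0
      | b # v' \<Rightarrow> if b = a then q powi (2 * bar a * height u) * qsh q u v' w else 0)"
proof (cases u)
  case Nil
  then show ?thesis by (cases v) (auto simp: wd_def)
next
  case (Cons b u')
  show ?thesis
  proof (cases v)
    case Nil
    then show ?thesis using Cons by (auto simp: wd_def)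
  next
    case (Cons b' v')
    show ?thesis
      unfolding \<open>u = b # u'\<close> \<open>v = b' # v'\<close> qsh.simps(3) sum_bform
      by (auto simp: prep_def)
  qed
qed

lemma qsh_nonzero_imp:
  "qsh q u v w \<noteq> 0 \<Longrightarrow> length w = length u + length v \<and> height w = height u + height v"
proof (induction w arbitrary: u v)
  case Nil
  then show ?case by (simp add: qsh_apply_Nil split: if_splits)
next
  case (Cons a w)
  have "(\<exists>u'. u = a # u' \<and> qsh q u' v w \<noteq> 0) \<or> (\<exists>v'. v = a # v' \<and> qsh q u v' w \<noteq> 0)"
  proof (rule ccontr)
    assume "\<not> ?thesis"
    then have "qsh q u v (a # w) = 0"
      unfolding qsh_apply_Cons by (auto split: list.split)
    with Cons.prems show False by simp
  qed
  then show ?case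
    using Cons.IH by fastforce
qed

section \<open>The q-shuffle product of finitely supported vectors\<close>

definition homogeneous :: "'a::field vec \<Rightarrow> int \<Rightarrow> bool" where
  "homogeneous f d \<longleftrightarrow> (\<forall>w. f w \<noteq> 0 \<longrightarrow> height w = d)"

lemma in_supp [simp]: "w \<in> supp f \<longleftrightarrow> f w \<noteq> 0"
  by (simp add: supp_def)

lemma supp_wd: "supp (wd u) = {u}"
  by (auto simp: supp_def wd_def)

lemma finite_supp_wd [simp]: "finite (supp (wd u))"
  by (simp add: supp_wd)

lemma finite_supp_diff [simp]:
  "finite (supp f) \<Longrightarrow> finite (supp g) \<Longrightarrow> finite (supp (\<lambda>v. f v - g v))"
  by (rule finite_subset[of _ "supp f \<union> supp g"]) auto

lemma finite_supp_scale [simp]: "finite (supp f) \<Longrightarrow> finite (supp (\<lambda>v. c * f v))"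
  by (rule finite_subset[of _ "supp f"]) auto

lemma finite_supp_lderiv [simp]: "finite (supp f) \<Longrightarrow> finite (supp (lderiv a f))"
proof -
  assume "finite (supp f)"
  moreover have "supp (lderiv a f) = Cons a -` supp f"
    by (auto simp: lderiv_apply)
  ultimately show ?thesis
    by (simp add: finite_vimageI)
qed

lemma finite_supp_prep [simp]: "finite (supp f) \<Longrightarrow> finite (supp (prep a f))"
proof -
  assume "finite (supp f)"
  moreover have "supp (prep a f) \<subseteq> Cons a ` supp f"
    by (auto simp: prep_def split: list.splits if_splits)
  ultimately show ?thesis
    using finite_subset by blast
qed

lemma homogeneous_wd: "homogeneous (wd u) (height u)"
  by (simp add: homogeneous_def wd_def)

lemma homogeneous_lderiv: "homogeneous f d \<Longrightarrow> homogeneous (lderiv a f) (d - bar a)"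
  by (auto simp: homogeneous_def lderiv_apply)

lemma homogeneous_prep: "homogeneous f d \<Longrightarrow> homogeneous (prep a f) (d + bar a)"
  by (auto simp: homogeneous_def prep_def split: list.splits if_splits)

lemma star_conv_sum:
  assumes "finite A" "supp f \<subseteq> A" "finite B" "supp g \<subseteq> B"
  shows "star q f g w = (\<Sum>u\<in>A. \<Sum>v\<in>B. f u * g v * qsh q u v w)"
proof -
  have "star q f g w = (\<Sum>u\<in>supp f. \<Sum>v\<in>B. f u * g v * qsh q u v w)"
    unfolding star_def using assms
    by (intro sum.cong refl sum.mono_neutral_left) (auto dest: finite_subset)
  also have "\<dots> = (\<Sum>u\<in>A. \<Sum>v\<in>B. f u * g v * qsh q u v w)"
    using assms by (intro sum.mono_neutral_left) auto
  finally show ?thesis .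
qed

lemma star_linear_left:
  assumes "finite (supp f)" "finite (supp g)" "finite (supp h)"
  shows "star q (\<lambda>v. a * f v + b * g v) h w = a * star q f h w + b * star q g h w"
proof -
  let ?A = "supp f \<union> supp g"
  have "star q (\<lambda>v. a * f v + b * g v) h w
      = (\<Sum>u\<in>?A. \<Sum>v\<in>supp h. (a * f u + b * g u) * h v * qsh q u v w)"
    using assms by (intro star_conv_sum) auto
  moreover have "star q f h w = (\<Sum>u\<in>?A. \<Sum>v\<in>supp h. f u * h v * qsh q u v w)"
    and "star q g h w = (\<Sum>u\<in>?A. \<Sum>v\<in>supp h. g u * h v * qsh q u v w)"
    using assms by (intro star_conv_sum; auto)+
  ultimately show ?thesis
    by (simp add: algebra_simps sum.distrib sum_distrib_left)
qed

lemma star_linear_right: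
  assumes "finite (supp f)" "finite (supp g)" "finite (supp h)"
  shows "star q h (\<lambda>v. a * f v + b * g v) w = a * star q h f w + b * star q h g w"
proof -
  let ?B = "supp f \<union> supp g"
  have "star q h (\<lambda>v. a * f v + b * g v) w
      = (\<Sum>u\<in>supp h. \<Sum>v\<in>?B. h u * (a * f v + b * g v) * qsh q u v w)"
    using assms by (intro star_conv_sum) auto
  moreover have "star q h f w = (\<Sum>u\<in>supp h. \<Sum>v\<in>?B. h u * f v * qsh q u v w)"
    and "star q h g w = (\<Sum>u\<in>supp h. \<Sum>v\<in>?B. h u * g v * qsh q u v w)"
    using assms by (intro star_conv_sum; auto)+
  ultimately show ?thesis
    by (simp add: algebra_simps sum.distrib sum_distrib_left)
qed

lemmas star_add_left = star_linear_left[where a = 1 and b = 1, simplified]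
lemmas star_add_right = star_linear_right[where a = 1 and b = 1, simplified]
lemmas star_diff_left = star_linear_left[where a = 1 and b = "-1", simplified]
lemmas star_diff_right = star_linear_right[where a = 1 and b = "-1", simplified]

lemma star_scale_left:
  "finite (supp f) \<Longrightarrow> finite (supp g) \<Longrightarrow> star q (\<lambda>v. c * f v) g w = c * star q f g w"
  using star_linear_left[of f f g q c 0] by simp

lemma star_scale_right:
  "finite (supp f) \<Longrightarrow> finite (supp g) \<Longrightarrow> star q f (\<lambda>v. c * g v) w = c * star q f g w"
  using star_linear_right[of g g f q c 0] by simp

lemma star_zero_left [simp]: "star q (\<lambda>v. 0) g w = 0"
  and star_zero_right [simp]: "star q f (\<lambda>v. 0) w = 0"
  by (simp_all add: star_def supp_def)

lemma star_wd_wd: "star q (wd u) (wd v) w = qsh q u v w"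
  unfolding star_def supp_wd by (simp add: wd_def)

lemma star_wd_Nil_left:
  assumes "finite (supp g)"
  shows "star q (wd []) g w = g w"
proof -
  have "star q (wd []) g w = (\<Sum>v\<in>supp g. g v * wd v w)"
    unfolding star_def supp_wd by (simp add: wd_def)
  also have "\<dots> = (\<Sum>v\<in>supp g. if v = w then g w else 0)"
    by (intro sum.cong) (auto simp: wd_def)
  finally show ?thesis
    using assms by simp
qed

lemma star_wd_Nil_right:
  assumes "finite (supp f)"
  shows "star q f (wd []) w = f w"
proof -
  have "star q f (wd []) w = (\<Sum>u\<in>supp f. f u * wd u w)"
    unfolding star_def supp_wd by (simp add: wd_def)
  also have "\<dots> = (\<Sum>u\<in>supp f. if u = w then f w else 0)"
    by (intro sum.cong) (auto simp: wd_def)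
  finally show ?thesis
    using assms by simp
qed

lemma star_apply_Nil:
  assumes "finite (supp f)" "finite (supp g)"
  shows "star q f g [] = f [] * g []"
proof -
  have "star q f g []
      = (\<Sum>u\<in>insert [] (supp f). \<Sum>v\<in>insert [] (supp g). f u * g v * qsh q u v [])"
    using assms by (intro star_conv_sum) auto
  also have "\<dots> = (\<Sum>u\<in>insert [] (supp f). if u = [] then f [] * g [] else 0)"
    using assms by (intro sum.cong) (auto simp: qsh_apply_Nil if_distrib cong: if_cong)
  also have "\<dots> = f [] * g []"
    using assms by simp
  finally show ?thesis .
qed

lemma sum_case_Cons_eq_sum_lderiv:
  assumes "finite (supp f)"
  shows "(\<Sum>u\<in>supp f. f u * (case u of [] \<Rightarrow> 0 | b # u' \<Rightarrow> if b = a then H u' else 0))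
       = (\<Sum>u'\<in>supp (lderiv a f). lderiv a f u' * H u')"
    (is "(\<Sum>u\<in>_. ?K u) = _")
proof -
  have "(\<Sum>u'\<in>supp (lderiv a f). lderiv a f u' * H u') = (\<Sum>u\<in>Cons a ` supp (lderiv a f). ?K u)"
    by (simp add: sum.reindex lderiv_apply)
  also have "\<dots> = (\<Sum>u\<in>supp f. ?K u)"
    using assms by (intro sum.mono_neutral_left) (auto simp: lderiv_apply split: list.split)
  finally show ?thesis ..
qed

text \<open>The first letter [a] of a q-shuffle comes either from the left factor, or from the right
  factor after passing the whole left factor, which costs [q^(2 bar a d)] when [f] has height [d].\<close>

lemma star_apply_Cons:
  assumes f: "finite (supp f)" and g: "finite (supp g)" and hom: "homogeneous f d"
  shows "star q f g (a # w) = star q (lderiv a f) g w + q powi (2 * bar a * d) * star q f (lderiv a g) w"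
proof -
  let ?first = "\<lambda>u v. case u of [] \<Rightarrow> 0 | b # u' \<Rightarrow> if b = a then qsh q u' v w else 0"
  let ?second = "\<lambda>u v. case v of [] \<Rightarrow> 0 | b # v' \<Rightarrow> if b = a then qsh q u v' w else 0"
  have height_u: "height u = d" if "u \<in> supp f" for u
    using hom that by (simp add: homogeneous_def)
  have "star q f g (a # w) = (\<Sum>u\<in>supp f. \<Sum>v\<in>supp g. f u * g v * ?first u v)
      + q powi (2 * bar a * d) * (\<Sum>u\<in>supp f. f u * (\<Sum>v\<in>supp g. g v * ?second u v))"
    unfolding star_def qsh_apply_Cons
    by (auto simp: distrib_left sum.distrib sum_distrib_left height_u mult_ac
        intro!: sum.cong split: list.split)
  also have "(\<Sum>u\<in>supp f. \<Sum>v\<in>supp g. f u * g v * ?first u v)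
      = (\<Sum>v\<in>supp g. g v * (\<Sum>u\<in>supp f. f u * ?first u v))"
    by (subst sum.swap) (simp add: sum_distrib_left mult_ac)
  also have "\<dots> = star q (lderiv a f) g w"
    unfolding star_def sum_case_Cons_eq_sum_lderiv[OF f]
    by (subst sum.swap) (simp add: sum_distrib_left mult_ac)
  also have "(\<Sum>u\<in>supp f. f u * (\<Sum>v\<in>supp g. g v * ?second u v)) = star q f (lderiv a g) w"
    unfolding star_def sum_case_Cons_eq_sum_lderiv[OF g]
    by (simp add: sum_distrib_left mult_ac)
  finally show ?thesis .
qed

lemma star_nonzero_imp:
  assumes "star q f g w \<noteq> 0"
  obtains u v where "f u \<noteq> 0" "g v \<noteq> 0" "qsh q u v w \<noteq> 0"
proof -
  obtain u where "u \<in> supp f" "(\<Sum>v\<in>supp g. f u * g v * qsh q u v w) \<noteq> 0"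
    using assms unfolding star_def by (rule sum.not_neutral_contains_not_neutral)
  moreover from this(2) obtain v where "v \<in> supp g" "f u * g v * qsh q u v w \<noteq> 0"
    by (rule sum.not_neutral_contains_not_neutral)
  ultimately show thesis
    using that by simp
qed

lemma finite_supp_star [simp]:
  assumes "finite (supp f)" "finite (supp g)"
  shows "finite (supp (star q f g))"
proof (rule finite_subset)
  show "supp (star q f g) \<subseteq> (\<Union>u\<in>supp f. \<Union>v\<in>supp g. {w. length w = length u + length v})"
    by (fastforce elim!: star_nonzero_imp dest!: qsh_nonzero_imp)
  show "finite (\<Union>u\<in>supp f. \<Union>v\<in>supp g. {w :: letter list. length w = length u + length v})"
    using assms by (simp add: finite_words_of_length)
qed

lemma homogeneous_star:
  assumes "homogeneous f d1" "homogeneous g d2"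
  shows "homogeneous (star q f g) (d1 + d2)"
  unfolding homogeneous_def
proof (intro allI impI)
  fix w
  assume "star q f g w \<noteq> 0"
  then obtain u v where "f u \<noteq> 0" "g v \<noteq> 0" "qsh q u v w \<noteq> 0"
    by (rule star_nonzero_imp)
  then show "height w = d1 + d2"
    using assms qsh_nonzero_imp by (fastforce simp: homogeneous_def)
qed

lemma star_assoc:
  assumes "q \<noteq> 0"
    and "finite (supp f)" "finite (supp g)" "finite (supp h)"
    and "homogeneous f d1" "homogeneous g d2"
  shows "star q (star q f g) h w = star q f (star q g h) w"
  using assms(2-)
proof (induction w arbitrary: f g h d1 d2)
  case Nil
  then show ?case by (simp add: star_apply_Nil)
next
  case (Cons a w)
  note fin = Cons.prems(1-3) and hom = Cons.prems(4,5)
  let ?p = "\<lambda>d. q powi (2 * bar a * d)"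
  have p_add: "?p (d1 + d2) = ?p d1 * ?p d2"
    using assms(1) by (simp add: power_int_add[symmetric] algebra_simps)
  have lderiv_fg:
    "lderiv a (star q f g) = (\<lambda>v. star q (lderiv a f) g v + ?p d1 * star q f (lderiv a g) v)"
    using star_apply_Cons[OF fin(1,2) hom(1)] by (simp add: lderiv_def)
  have lderiv_gh:
    "lderiv a (star q g h) = (\<lambda>v. star q (lderiv a g) h v + ?p d2 * star q g (lderiv a h) v)"
    using star_apply_Cons[OF fin(2,3) hom(2)] by (simp add: lderiv_def)
  have "star q (star q f g) h (a # w)
      = star q (lderiv a (star q f g)) h w + ?p (d1 + d2) * star q (star q f g) (lderiv a h) w"
    using fin hom by (intro star_apply_Cons homogeneous_star) simp_all
  also have "star q (lderiv a (star q f g)) h w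
      = star q (star q (lderiv a f) g) h w + ?p d1 * star q (star q f (lderiv a g)) h w"
    unfolding lderiv_fg using fin by (simp add: star_add_left star_scale_left)
  also have "star q (star q (lderiv a f) g) h w = star q (lderiv a f) (star q g h) w"
    using fin hom homogeneous_lderiv by (intro Cons.IH[of _ _ _ "d1 - bar a" d2]) simp_all
  also have "star q (star q f (lderiv a g)) h w = star q f (star q (lderiv a g) h) w"
    using fin hom homogeneous_lderiv by (intro Cons.IH[of _ _ _ d1 "d2 - bar a"]) simp_all
  also have "star q (star q f g) (lderiv a h) w = star q f (star q g (lderiv a h)) w"
    using fin hom by (intro Cons.IH) simp_all
  also have "star q (lderiv a f) (star q g h) w + ?p d1 * star q f (star q (lderiv a g) h) w
      + ?p (d1 + d2) * star q f (star q g (lderiv a h)) w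
      = star q (lderiv a f) (star q g h) w + ?p d1 * star q f (lderiv a (star q g h)) w"
  proof -
    have "star q f (lderiv a (star q g h)) w
        = star q f (star q (lderiv a g) h) w + ?p d2 * star q f (star q g (lderiv a h)) w"
      unfolding lderiv_gh using fin by (simp add: star_add_right star_scale_right)
    then show ?thesis
      unfolding p_add by (simp add: algebra_simps)
  qed
  also have "\<dots> = star q f (star q g h) (a # w)"
    using fin hom by (intro star_apply_Cons[symmetric]) simp_all
  finally show ?case .
qed

lemma lderiv_wd_Cons: "lderiv a (wd (b # u)) = (if a = b then wd u else (\<lambda>v. 0))"
  by (auto simp: lderiv_def wd_def)

lemma lderiv_prep: "lderiv a (prep b f) = (if a = b then f else (\<lambda>v. 0))"
  by (auto simp: lderiv_def prep_def)

lemma wd_Cons_Nil [simp]: "wd (a # u) [] = 0"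
  and wd_Nil_Cons [simp]: "wd [] (a # w) = 0"
  by (simp_all add: wd_def)

lemma star_wd_Cons_left_apply_Cons:
  assumes "finite (supp g)"
  shows "star q (wd (b # u)) g (a # w)
    = (if a = b then star q (wd u) g w else 0)
      + q powi (2 * bar a * height (b # u)) * star q (wd (b # u)) (lderiv a g) w"
  using assms by (simp add: star_apply_Cons[OF _ _ homogeneous_wd] lderiv_wd_Cons)

lemma star_wd_Cons_right_apply_Cons:
  assumes "finite (supp f)" "homogeneous f d"
  shows "star q f (wd (b # u)) (a # w)
    = star q (lderiv a f) (wd (b # u)) w + (if a = b then q powi (2 * bar a * d) * star q f (wd u) w else 0)"
  using assms by (simp add: star_apply_Cons lderiv_wd_Cons)

lemma homogeneous_wdI: "height u = d \<Longrightarrow> homogeneous (wd u) d"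
  using homogeneous_wd by blast

section \<open>q-integers and weighted lattice paths\<close>

lemma qint_0 [simp]: "qint q 0 = 0"
  by (simp add: qint_def)

lemma qint_1: "(q::'a::field) - inverse q \<noteq> 0 \<Longrightarrow> qint q 1 = 1"
  by (simp add: qint_def power_int_minus)

lemma qint_mult_diff:
  "(q::'a::field) - inverse q \<noteq> 0 \<Longrightarrow> (q - inverse q) * qint q n = q powi n - inverse (q powi n)"
  by (simp add: qint_def power_int_minus)

lemma qint_succ_minus_pred:
  fixes q :: "'a::field"
  assumes q: "q \<noteq> 0" and c: "q - inverse q \<noteq> 0"
  shows "qint q (n + 1) - qint q (n - 1) = q powi n + inverse (q powi n)"
proof -
  define t where "t = q powi n"
  have t: "t \<noteq> 0"
    using q by (simp add: t_def)
  have "q powi (n + 1) = t * q" and "q powi (n - 1) = t * inverse q"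
    using q by (simp_all add: t_def power_int_add power_int_diff field_simps)
  then have "(q - inverse q) * (qint q (n + 1) - qint q (n - 1))
      = (t * q - inverse (t * q)) - (t * inverse q - inverse (t * inverse q))"
    by (simp add: right_diff_distrib qint_mult_diff[OF c])
  also have "\<dots> = (q - inverse q) * (t + inverse t)"
    using q t by (simp add: algebra_simps)
  finally show ?thesis
    using c by (simp add: t_def)
qed

lemma power_int_double_diff:
  assumes "(q::'a::field) \<noteq> 0"
  shows "q powi (2 * (m - h)) * (q powi h)^2 = (q powi m)^2"
proof -
  have "q powi (2 * (m - h)) = q powi (m - h) * q powi (m - h)"
    unfolding mult_2 by (rule power_int_add) (simp add: assms)
  also have "q powi (m - h) = q powi m / q powi h"
    by (rule power_int_diff) (simp add: assms)
  finally show ?thesis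
    using assms by (simp add: power2_eq_square)
qed

text \<open>With [t = q^h] the right-hand side is [q^2 t^2 ((qt)^2 - (qt)^(-2))].\<close>

lemma qint_succ_mult_diff:
  fixes q :: "'a::field"
  assumes q: "q \<noteq> 0" and c: "q - inverse q \<noteq> 0"
  shows "q^4 * (q powi h)^4 - 1
    = (q - inverse q) * q^2 * (q powi h)^2 * qint q (h + 1) * (qint q (h + 2) - qint q h)"
proof -
  define t where "t = q powi h"
  have t: "t \<noteq> 0"
    using q by (simp add: t_def)
  have "(q - inverse q) * qint q (h + 1) = t * q - inverse (t * q)"
    using qint_mult_diff[OF c, of "h + 1"] q by (simp add: t_def power_int_add)
  moreover have "qint q (h + 2) - qint q h = t * q + inverse (t * q)"
    using qint_succ_minus_pred[OF q c, of "h + 1"] q by (simp add: t_def power_int_add add.assoc)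
  moreover have "inverse (t * q) * (t * q) = 1"
    using q t by (simp add: field_simps)
  ultimately show ?thesis
    unfolding t_def[symmetric] by algebra
qed

text \<open>[paths q s h m r w] reads [w] as a lattice path of [r] steps ([X] up, [Y] down) from
  height [h] to height [m]; it is the product of [qint q (h' + s)] over the heights [h'] before
  each step, and [0] if [w] is not such a path.\<close>

fun paths :: "'a::field \<Rightarrow> int \<Rightarrow> int \<Rightarrow> int \<Rightarrow> nat \<Rightarrow> 'a vec" where
  "paths q s h m 0 [] = (if h = m then 1 else 0)"
| "paths q s h m (Suc r) (a # w) = qint q (h + s) * paths q s (h + bar a) m r w"
| "paths q s h m 0 (a # w) = 0"
| "paths q s h m (Suc r) [] = 0"

lemma paths_0: "paths q s h m 0 w = (if w = [] \<and> h = m then 1 else 0)"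
  by (cases w) simp_all

lemma paths_nonzero_imp: "paths q s h m r w \<noteq> 0 \<Longrightarrow> length w = r \<and> height w = m - h"
proof (induction w arbitrary: h r)
  case Nil
  then show ?case by (cases r) (auto split: if_splits)
next
  case (Cons a w)
  then show ?case by (cases r) fastforce+
qed

lemma finite_supp_paths [simp]: "finite (supp (paths q s h m r))"
proof (rule finite_subset)
  show "supp (paths q s h m r) \<subseteq> {w. length w = r}"
    by (auto dest: paths_nonzero_imp)
qed (rule finite_words_of_length)

lemma homogeneous_paths: "homogeneous (paths q s h m r) (m - h)"
  using paths_nonzero_imp unfolding homogeneous_def by blast

lemma lderiv_paths_0: "lderiv a (paths q s h m 0) = (\<lambda>v. 0)"
  by (simp add: lderiv_def)

lemma lderiv_paths_Suc:
  "lderiv a (paths q s h m (Suc r)) = (\<lambda>v. qint q (h + s) * paths q s (h + bar a) m r v)"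
  by (simp add: lderiv_def)

lemma paths_shift: "paths q s (h + 1) (m + 1) r w = paths q (s + 1) h m r w"
proof (induction w arbitrary: h r)
  case Nil
  then show ?case by (cases r) simp_all
next
  case (Cons a w)
  show ?case
  proof (cases r)
    case (Suc r')
    have e1: "h + 1 + bar a = (h + bar a) + 1" and e2: "h + 1 + s = h + (s + 1)"
      by simp_all
    show ?thesis
      unfolding Suc paths.simps e1 e2 Cons.IH ..
  qed simp
qed

lemma paths_Suc_at_zero_weight: "h + s = 0 \<Longrightarrow> paths q s h m (Suc r) w = 0"
  by (cases w) simp_all

text \<open>A path from height [h \<ge> -s] down to [m < -s] passes height [-s], where the weight
  [qint q 0 = 0] occurs.\<close>

lemma paths_below_zero_weight: "h \<ge> -s \<Longrightarrow> m < -s \<Longrightarrow> paths q s h m r w = 0"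
proof (induction w arbitrary: h r)
  case Nil
  then show ?case by (cases r) simp_all
next
  case (Cons a w)
  show ?case
  proof (cases r)
    case (Suc r')
    show ?thesis
    proof (cases "h = -s")
      case False
      then have "h + bar a \<ge> -s"
        using Cons.prems by (cases a) auto
      then show ?thesis
        using Suc Cons by simp
    qed (simp add: Suc)
  qed simp
qed

lemma paths_snoc:
  "paths q s h m (Suc r) (w @ [a]) = paths q s h (m - bar a) r w * qint q (m - bar a + s)"
proof (induction w arbitrary: h r)
  case Nil
  show ?case
  proof (cases r)
    case 0
    have "(h + bar a = m) = (h = m - bar a)"
      by auto
    then show ?thesis
      using 0 by (auto simp: algebra_simps)
  qed simp
next
  case (Cons b w)
  then show ?case
    by (cases r) (cases w; simp_all)+
qed

lemma sum_bar_nth_Cons: "(\<Sum>j<Suc i. bar ((a # w) ! j)) = bar a + (\<Sum>j<i. bar (w ! j))"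
  unfolding sum.lessThan_Suc_shift by simp

lemma paths_closed_form:
  "paths q s h m r w = (if length w = r \<and> h + (\<Sum>j<length w. bar (w ! j)) = m
      then (\<Prod>i<length w. qint q (h + s + (\<Sum>j<i. bar (w ! j)))) else 0)"
proof (induction w arbitrary: h r)
  case Nil
  then show ?case by (cases r) simp_all
next
  case (Cons a w)
  show ?case
  proof (cases r)
    case (Suc r')
    let ?C = "length w = r' \<and> h + bar a + (\<Sum>j<length w. bar (w ! j)) = m"
    let ?P = "\<Prod>i<length w. qint q (h + bar a + s + (\<Sum>j<i. bar (w ! j)))"
    have prod: "(\<Prod>i<length (a # w). qint q (h + s + (\<Sum>j<i. bar ((a # w) ! j))))
        = qint q (h + s) * ?P"
      unfolding length_Cons prod.lessThan_Suc_shift sum_bar_nth_Cons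
      by (simp add: algebra_simps del: sum.lessThan_Suc prod.lessThan_Suc)
    have end_height: "(h + (\<Sum>j<length (a # w). bar ((a # w) ! j)) = m)
        = (h + bar a + (\<Sum>j<length w. bar (w ! j)) = m)"
      by (simp only: length_Cons sum_bar_nth_Cons) (simp add: algebra_simps)
    have cond: "(length (a # w) = r \<and> h + bar a + (\<Sum>j<length w. bar (w ! j)) = m) = ?C"
      using Suc by simp
    have "paths q s h m r (a # w) = qint q (h + s) * (if ?C then ?P else 0)"
      unfolding Suc paths.simps Cons.IH[of "h + bar a" r'] ..
    also have "\<dots> = (if ?C then qint q (h + s) * ?P else 0)"
      by (simp only: mult_zero_right if_distrib[of "times (qint q (h + s))"])
    finally show ?thesis
      unfolding prod end_height cond .
  qed simp
qed

lemma paths_nonzero_imp_nonneg: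
  "h \<ge> 0 \<Longrightarrow> paths q 1 h m r w \<noteq> 0 \<Longrightarrow> \<forall>i<length w. h + (\<Sum>j<i. bar (w ! j)) \<ge> 0"
proof (induction w arbitrary: h r)
  case Nil
  then show ?case by simp
next
  case (Cons a w)
  obtain r' where r: "r = Suc r'"
    using Cons.prems by (cases r) auto
  have nonzero: "paths q 1 (h + bar a) m r' w \<noteq> 0"
    using Cons.prems r by auto
  show ?case
  proof (intro allI impI)
    fix i
    assume i: "i < length (a # w)"
    show "h + (\<Sum>j<i. bar ((a # w) ! j)) \<ge> 0"
    proof (cases i)
      case 0
      then show ?thesis using Cons.prems by simp
    next
      case (Suc i')
      show ?thesis
      proof (cases "h + bar a \<ge> 0")
        case True
        then show ?thesis
          using Cons.IH[OF True nonzero] i Suc sum_bar_nth_Cons[where i = i'] by auto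
      next
        case False
        then have "h + bar a = -1"
          using Cons.prems by (cases a) auto
        then have "w = []"
          using nonzero by (cases w; cases r') simp_all
        then show ?thesis
          using i Suc by simp
      qed
    qed
  qed
qed

section \<open>q-commutation of paths with x and y\<close>

lemma x_star_paths_Cons_X:
  fixes q :: "'a::field"
  assumes q: "q \<noteq> 0" and c: "q - inverse q \<noteq> 0"
    and IH: "\<And>h r. q^4 * (q powi m)^2 * (q powi h)^2 * star q (wd [X]) (paths q 1 h m r) w
        - star q (paths q 1 h m r) (wd [X]) w
      = (q - inverse q) * q^2 * (q powi m)^2 *
        (qint q (m + 2) * paths q 1 h (m + 1) (Suc r) w - qint q (h + 1) * paths q 0 h (m + 1) (Suc r) w)"
  shows "q^4 * (q powi m)^2 * (q powi h)^2 * star q (wd [X]) (paths q 1 h m r) (X # w)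
        - star q (paths q 1 h m r) (wd [X]) (X # w)
      = (q - inverse q) * q^2 * (q powi m)^2 *
        (qint q (m + 2) * paths q 1 h (m + 1) (Suc r) (X # w)
          - qint q (h + 1) * paths q 0 h (m + 1) (Suc r) (X # w))"
proof -
  define t where "t = q powi h"
  define u where "u = q powi m"
  define z where "z = q powi (2 * (m - h))"
  have t: "t \<noteq> 0"
    using q by (simp add: t_def)
  have zt: "z * t^2 = u^2"
    unfolding z_def t_def u_def by (rule power_int_double_diff[OF q])
  have ci: "q^4 * t^4 - 1 = (q - inverse q) * q^2 * t^2 * qint q (h + 1) * (qint q (h + 2) - qint q h)"
    unfolding t_def by (rule qint_succ_mult_diff[OF q c])
  let ?F = "paths q 1 h m r"
  have x_F: "star q (wd [X]) ?F (X # w) = ?F w + q^2 * star q (wd [X]) (lderiv X ?F) w"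
    by (subst star_apply_Cons[where d = 1]) (simp_all add: homogeneous_wdI lderiv_wd_Cons star_wd_Nil_left)
  have F_x: "star q ?F (wd [X]) (X # w) = star q (lderiv X ?F) (wd [X]) w + z * ?F w"
    by (subst star_apply_Cons[where d = "m - h"])
      (simp_all add: homogeneous_paths lderiv_wd_Cons star_wd_Nil_right z_def)
  show ?thesis
  proof (cases r)
    case 0
    show ?thesis
    proof (cases "w = [] \<and> h = m")
      case True
      then have "z = 1" "t = u"
        by (simp_all add: z_def t_def u_def)
      then show ?thesis
        using x_F F_x ci True 0
        by (simp add: lderiv_paths_0 t_def u_def algebra_simps power4_eq_xxxx power2_eq_square)
    next
      case False
      then show ?thesis
        using x_F F_x 0 by (auto simp: lderiv_paths_0 paths_0)
    qed
  next
    case (Suc r')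
    let ?F' = "paths q 1 (h + 1) m r'"
    define Sx where "Sx = star q (wd [X]) ?F' w"
    define P where "P = star q ?F' (wd [X]) w"
    define A where "A = paths q 1 (h + 1) (m + 1) (Suc r') w"
    define B where "B = paths q 0 (h + 1) (m + 1) (Suc r') w"
    have F_w: "?F w = B"
      using paths_shift[of q 0 h m "Suc r'" w] by (simp add: Suc B_def)
    have "star q (wd [X]) ?F (X # w) = B + q^2 * (qint q (h + 1) * Sx)"
      using x_F F_w by (simp add: Suc lderiv_paths_Suc star_scale_right Sx_def)
    moreover have "star q ?F (wd [X]) (X # w) = qint q (h + 1) * P + z * B"
      using F_x F_w by (simp add: Suc lderiv_paths_Suc star_scale_left P_def)
    moreover have "q^4 * u^2 * (t * q)^2 * Sx - P
        = (q - inverse q) * q^2 * u^2 * (qint q (m + 2) * A - qint q (h + 2) * B)"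
      using IH[of "h + 1" r'] q by (simp add: power_int_add t_def u_def Sx_def P_def A_def B_def add.assoc)
    moreover have "paths q 1 h (m + 1) (Suc r) (X # w) = qint q (h + 1) * A"
      and "paths q 0 h (m + 1) (Suc r) (X # w) = qint q h * B"
      by (simp_all add: Suc A_def B_def)
    ultimately show ?thesis
      unfolding t_def[symmetric] u_def[symmetric] using ci zt by algebra
  qed
qed

lemma x_star_paths_Cons_Y:
  fixes q :: "'a::field"
  assumes q: "q \<noteq> 0"
    and IH: "\<And>h r. q^4 * (q powi m)^2 * (q powi h)^2 * star q (wd [X]) (paths q 1 h m r) w
        - star q (paths q 1 h m r) (wd [X]) w
      = (q - inverse q) * q^2 * (q powi m)^2 *
        (qint q (m + 2) * paths q 1 h (m + 1) (Suc r) w - qint q (h + 1) * paths q 0 h (m + 1) (Suc r) w)"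
  shows "q^4 * (q powi m)^2 * (q powi h)^2 * star q (wd [X]) (paths q 1 h m r) (Y # w)
        - star q (paths q 1 h m r) (wd [X]) (Y # w)
      = (q - inverse q) * q^2 * (q powi m)^2 *
        (qint q (m + 2) * paths q 1 h (m + 1) (Suc r) (Y # w)
          - qint q (h + 1) * paths q 0 h (m + 1) (Suc r) (Y # w))"
proof -
  let ?F = "paths q 1 h m r"
  have x_F: "star q (wd [X]) ?F (Y # w) = inverse (q^2) * star q (wd [X]) (lderiv Y ?F) w"
    by (subst star_apply_Cons[where d = 1]) (simp_all add: homogeneous_wdI lderiv_wd_Cons power_int_minus)
  have F_x: "star q ?F (wd [X]) (Y # w) = star q (lderiv Y ?F) (wd [X]) w"
    by (subst star_apply_Cons[where d = "m - h"]) (simp_all add: homogeneous_paths lderiv_wd_Cons)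
  show ?thesis
  proof (cases r)
    case 0
    then show ?thesis
      using x_F F_x by (auto simp: lderiv_paths_0 paths_0 add.commute)
  next
    case (Suc r')
    let ?F' = "paths q 1 (h - 1) m r'"
    define Sx where "Sx = star q (wd [X]) ?F' w"
    define P where "P = star q ?F' (wd [X]) w"
    define A where "A = paths q 1 (h - 1) (m + 1) (Suc r') w"
    define B where "B = paths q 0 (h - 1) (m + 1) (Suc r') w"
    have "star q (wd [X]) ?F (Y # w) = inverse (q^2) * (qint q (h + 1) * Sx)"
      using x_F by (simp add: Suc lderiv_paths_Suc star_scale_right Sx_def)
    moreover have "star q ?F (wd [X]) (Y # w) = qint q (h + 1) * P"
      using F_x by (simp add: Suc lderiv_paths_Suc star_scale_left P_def)
    moreover have "q^4 * (q powi m)^2 * (q powi (h - 1))^2 * Sx - P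
        = (q - inverse q) * q^2 * (q powi m)^2 * (qint q (m + 2) * A - qint q h * B)"
      using IH[of "h - 1" r'] by (simp add: Sx_def P_def A_def B_def)
    moreover have "q powi (h - 1) * q = q powi h"
      using q by (simp add: power_int_diff)
    moreover have "inverse (q^2) * q^2 = 1"
      using q by simp
    moreover have "paths q 1 h (m + 1) (Suc r) (Y # w) = qint q (h + 1) * A"
      and "paths q 0 h (m + 1) (Suc r) (Y # w) = qint q h * B"
      by (simp_all add: Suc A_def B_def)
    ultimately show ?thesis
      by algebra
  qed
qed

lemma x_star_paths:
  fixes q :: "'a::field"
  assumes q: "q \<noteq> 0" and c: "q - inverse q \<noteq> 0"
  shows "q^4 * (q powi m)^2 * (q powi h)^2 * star q (wd [X]) (paths q 1 h m r) w
        - star q (paths q 1 h m r) (wd [X]) w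
      = (q - inverse q) * q^2 * (q powi m)^2 *
        (qint q (m + 2) * paths q 1 h (m + 1) (Suc r) w - qint q (h + 1) * paths q 0 h (m + 1) (Suc r) w)"
proof (induction w arbitrary: h r)
  case Nil
  then show ?case by (simp add: star_apply_Nil)
next
  case (Cons a w)
  then show ?case
    by (cases a) (simp_all add: x_star_paths_Cons_X[OF q c] x_star_paths_Cons_Y[OF q])
qed

lemma paths_star_y_Cons_X:
  fixes q :: "'a::field"
  assumes q: "q \<noteq> 0"
    and IH: "\<And>h r. q^4 * (q powi m)^2 * (q powi h)^2 * star q (paths q 1 h m r) (wd [Y]) w
        - star q (wd [Y]) (paths q 1 h m r) w
      = (q - inverse q) * q^2 * (q powi h)^2 *
        (qint q (h + 1) * paths q 2 h (m - 1) (Suc r) w - qint q m * paths q 1 h (m - 1) (Suc r) w)"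
  shows "q^4 * (q powi m)^2 * (q powi h)^2 * star q (paths q 1 h m r) (wd [Y]) (X # w)
        - star q (wd [Y]) (paths q 1 h m r) (X # w)
      = (q - inverse q) * q^2 * (q powi h)^2 *
        (qint q (h + 1) * paths q 2 h (m - 1) (Suc r) (X # w)
          - qint q m * paths q 1 h (m - 1) (Suc r) (X # w))"
proof -
  let ?F = "paths q 1 h m r"
  have F_y: "star q ?F (wd [Y]) (X # w) = star q (lderiv X ?F) (wd [Y]) w"
    by (subst star_apply_Cons[where d = "m - h"]) (simp_all add: homogeneous_paths lderiv_wd_Cons)
  have y_F: "star q (wd [Y]) ?F (X # w) = inverse (q^2) * star q (wd [Y]) (lderiv X ?F) w"
    by (subst star_apply_Cons[where d = "-1"]) (simp_all add: homogeneous_wdI lderiv_wd_Cons power_int_minus)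
  show ?thesis
  proof (cases r)
    case 0
    then show ?thesis
      using F_y y_F by (auto simp: lderiv_paths_0 paths_0 add.commute)
  next
    case (Suc r')
    let ?F' = "paths q 1 (h + 1) m r'"
    define Sfy where "Sfy = star q ?F' (wd [Y]) w"
    define Syf where "Syf = star q (wd [Y]) ?F' w"
    define A where "A = paths q 2 (h + 1) (m - 1) (Suc r') w"
    define B where "B = paths q 1 (h + 1) (m - 1) (Suc r') w"
    have "star q ?F (wd [Y]) (X # w) = qint q (h + 1) * Sfy"
      using F_y by (simp add: Suc lderiv_paths_Suc star_scale_left Sfy_def)
    moreover have "star q (wd [Y]) ?F (X # w) = inverse (q^2) * (qint q (h + 1) * Syf)"
      using y_F by (simp add: Suc lderiv_paths_Suc star_scale_right Syf_def)
    moreover have "q^4 * (q powi m)^2 * (q powi h * q)^2 * Sfy - Syf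
        = (q - inverse q) * q^2 * (q powi h * q)^2 * (qint q (h + 2) * A - qint q m * B)"
      using IH[of "h + 1" r'] q by (simp add: power_int_add Sfy_def Syf_def A_def B_def add.assoc)
    moreover have "inverse (q^2) * q^2 = 1"
      using q by simp
    moreover have "paths q 2 h (m - 1) (Suc r) (X # w) = qint q (h + 2) * A"
      and "paths q 1 h (m - 1) (Suc r) (X # w) = qint q (h + 1) * B"
      by (simp_all add: Suc A_def B_def)
    ultimately show ?thesis
      by algebra
  qed
qed

lemma paths_star_y_Cons_Y:
  fixes q :: "'a::field"
  assumes q: "q \<noteq> 0" and c: "q - inverse q \<noteq> 0"
    and IH: "\<And>h r. q^4 * (q powi m)^2 * (q powi h)^2 * star q (paths q 1 h m r) (wd [Y]) w
        - star q (wd [Y]) (paths q 1 h m r) w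
      = (q - inverse q) * q^2 * (q powi h)^2 *
        (qint q (h + 1) * paths q 2 h (m - 1) (Suc r) w - qint q m * paths q 1 h (m - 1) (Suc r) w)"
  shows "q^4 * (q powi m)^2 * (q powi h)^2 * star q (paths q 1 h m r) (wd [Y]) (Y # w)
        - star q (wd [Y]) (paths q 1 h m r) (Y # w)
      = (q - inverse q) * q^2 * (q powi h)^2 *
        (qint q (h + 1) * paths q 2 h (m - 1) (Suc r) (Y # w)
          - qint q m * paths q 1 h (m - 1) (Suc r) (Y # w))"
proof -
  define t where "t = q powi h"
  define u where "u = q powi m"
  define z where "z = q powi (2 * (h - m))"
  have zu: "z * u^2 = t^2"
    unfolding z_def t_def u_def by (rule power_int_double_diff[OF q])
  have ci: "q^4 * t^4 - 1 = (q - inverse q) * q^2 * t^2 * qint q (h + 1) * (qint q (h + 2) - qint q h)"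
    unfolding t_def by (rule qint_succ_mult_diff[OF q c])
  let ?F = "paths q 1 h m r"
  have F_y: "star q ?F (wd [Y]) (Y # w) = star q (lderiv Y ?F) (wd [Y]) w + z * ?F w"
    by (subst star_apply_Cons[where d = "m - h"])
      (simp_all add: homogeneous_paths lderiv_wd_Cons star_wd_Nil_right z_def algebra_simps)
  have y_F: "star q (wd [Y]) ?F (Y # w) = ?F w + q^2 * star q (wd [Y]) (lderiv Y ?F) w"
    by (subst star_apply_Cons[where d = "-1"]) (simp_all add: homogeneous_wdI lderiv_wd_Cons star_wd_Nil_left)
  show ?thesis
  proof (cases r)
    case 0
    show ?thesis
    proof (cases "w = [] \<and> h = m")
      case True
      then have "z = 1" "t = u"
        by (simp_all add: z_def t_def u_def)
      then show ?thesis
        using F_y y_F ci True 0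
        by (simp add: lderiv_paths_0 t_def u_def algebra_simps power4_eq_xxxx power2_eq_square)
    next
      case False
      then show ?thesis
        using F_y y_F 0 by (auto simp: lderiv_paths_0 paths_0)
    qed
  next
    case (Suc r')
    let ?F' = "paths q 1 (h - 1) m r'"
    define Sfy where "Sfy = star q ?F' (wd [Y]) w"
    define Syf where "Syf = star q (wd [Y]) ?F' w"
    define A where "A = paths q 2 (h - 1) (m - 1) (Suc r') w"
    define B where "B = paths q 1 (h - 1) (m - 1) (Suc r') w"
    have F_w: "?F w = A"
      using paths_shift[of q 1 "h - 1" "m - 1" "Suc r'" w] Suc by (simp add: A_def)
    have "star q ?F (wd [Y]) (Y # w) = qint q (h + 1) * Sfy + z * A"
      using F_y F_w by (simp add: Suc lderiv_paths_Suc star_scale_left Sfy_def)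
    moreover have "star q (wd [Y]) ?F (Y # w) = A + q^2 * (qint q (h + 1) * Syf)"
      using y_F F_w by (simp add: Suc lderiv_paths_Suc star_scale_right Syf_def)
    moreover have "q^4 * u^2 * (q powi (h - 1))^2 * Sfy - Syf
        = (q - inverse q) * q^2 * (q powi (h - 1))^2 * (qint q h * A - qint q m * B)"
      using IH[of "h - 1" r'] by (simp add: u_def Sfy_def Syf_def A_def B_def)
    moreover have "q powi (h - 1) * q = t"
      using q by (simp add: t_def power_int_diff)
    moreover have "paths q 2 h (m - 1) (Suc r) (Y # w) = qint q (h + 2) * A"
      and "paths q 1 h (m - 1) (Suc r) (Y # w) = qint q (h + 1) * B"
      by (simp_all add: Suc A_def B_def)
    ultimately show ?thesis
      unfolding t_def[symmetric] u_def[symmetric] using zu ci by algebra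
  qed
qed

lemma paths_star_y:
  fixes q :: "'a::field"
  assumes q: "q \<noteq> 0" and c: "q - inverse q \<noteq> 0"
  shows "q^4 * (q powi m)^2 * (q powi h)^2 * star q (paths q 1 h m r) (wd [Y]) w
        - star q (wd [Y]) (paths q 1 h m r) w
      = (q - inverse q) * q^2 * (q powi h)^2 *
        (qint q (h + 1) * paths q 2 h (m - 1) (Suc r) w - qint q m * paths q 1 h (m - 1) (Suc r) w)"
proof (induction w arbitrary: h r)
  case Nil
  then show ?case by (simp add: star_apply_Nil)
next
  case (Cons a w)
  then show ?case
    by (cases a) (simp_all add: paths_star_y_Cons_X[OF q] paths_star_y_Cons_Y[OF q c])
qed

section \<open>The Catalan elements\<close>

lemma prep_Nil [simp]: "prep a f [] = 0"
  and prep_Cons [simp]: "prep a f (b # w) = (if b = a then f w else 0)"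
  by (simp_all add: prep_def)

text \<open>The elements [C_n], [C_n y], [x C_n] and [x C_n y] of the paper, as path vectors
  (see [Cat_eq_cat]).\<close>

definition cat :: "'a::field \<Rightarrow> nat \<Rightarrow> 'a vec" where
  "cat q n = paths q 1 0 0 (2 * n)"

definition cat_y :: "'a::field \<Rightarrow> nat \<Rightarrow> 'a vec" where
  "cat_y q n = paths q 1 0 (-1) (2 * n + 1)"

definition x_cat :: "'a::field \<Rightarrow> nat \<Rightarrow> 'a vec" where
  "x_cat q n = prep X (cat q n)"

definition x_cat_y :: "'a::field \<Rightarrow> nat \<Rightarrow> 'a vec" where
  "x_cat_y q n = prep X (cat_y q n)"

lemma finite_supp_cat [simp]:
  "finite (supp (cat q n))" "finite (supp (cat_y q n))"
  "finite (supp (x_cat q n))" "finite (supp (x_cat_y q n))"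
  by (simp_all add: cat_def cat_y_def x_cat_def x_cat_y_def)

lemma homogeneous_cat:
  "homogeneous (cat q n) 0" "homogeneous (cat_y q n) (-1)"
  "homogeneous (x_cat q n) 1" "homogeneous (x_cat_y q n) 0"
  using homogeneous_paths[of q 1 0 0 "2 * n"] homogeneous_paths[of q 1 0 "-1" "2 * n + 1"]
    homogeneous_prep[OF homogeneous_paths[of q 1 0 0 "2 * n"], of X]
    homogeneous_prep[OF homogeneous_paths[of q 1 0 "-1" "2 * n + 1"], of X]
  by (simp_all add: cat_def cat_y_def x_cat_def x_cat_y_def)

lemma x_cat_apply:
  "x_cat q n [] = 0" "x_cat q n (a # w) = (if a = X then cat q n w else 0)"
  and x_cat_y_apply:
  "x_cat_y q n [] = 0" "x_cat_y q n (a # w) = (if a = X then cat_y q n w else 0)"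
  by (simp_all add: x_cat_def x_cat_y_def)

lemma lderiv_x_cat: "lderiv a (x_cat q n) = (if a = X then cat q n else (\<lambda>v. 0))"
  and lderiv_x_cat_y: "lderiv a (x_cat_y q n) = (if a = X then cat_y q n else (\<lambda>v. 0))"
  by (simp_all add: x_cat_def x_cat_y_def lderiv_prep)

lemmas star_apply_Cons_simps =
  star_wd_Cons_left_apply_Cons star_wd_Nil_left star_wd_Nil_right
  star_wd_Cons_right_apply_Cons[OF finite_supp_cat(1) homogeneous_cat(1)]
  star_wd_Cons_right_apply_Cons[OF finite_supp_cat(2) homogeneous_cat(2)]
  star_wd_Cons_right_apply_Cons[OF finite_supp_cat(3) homogeneous_cat(3)]
  star_wd_Cons_right_apply_Cons[OF finite_supp_cat(4) homogeneous_cat(4)]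
  lderiv_x_cat lderiv_x_cat_y x_cat_apply x_cat_y_apply

lemma x_cat_0: "x_cat q 0 = wd [X]"
  by (auto simp: x_cat_def cat_def wd_def paths_0 prep_def split: list.split)

lemma cat_y_0:
  assumes "(q::'a::field) - inverse q \<noteq> 0"
  shows "cat_y q 0 = wd [Y]"
proof
  fix w
  have not_X: "a \<noteq> X \<longleftrightarrow> a = Y" for a
    by (cases a) simp_all
  show "cat_y q 0 w = wd [Y] w"
    using assms
    by (cases w rule: remdups_adj.cases) (auto simp: cat_y_def wd_def paths_0 qint_1 bar_def not_X)
qed

lemma Cat_eq_cat:
  assumes c: "(q::'a::field) - inverse q \<noteq> 0"
  shows "Cat q n = cat q n"
proof
  fix w
  let ?S = "\<lambda>i. \<Sum>j<i. bar (w ! j)"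
  have cat_w: "cat q n w = (if length w = 2 * n \<and> ?S (length w) = 0
      then (\<Prod>i<length w. qint q (1 + ?S i)) else 0)"
    unfolding cat_def paths_closed_form add_0_left ..
  show "Cat q n w = cat q n w"
  proof (cases "catalan w \<and> length w = 2 * n")
    case True
    then have S: "?S (length w) = 0"
      unfolding catalan_def by blast
    have "(\<Prod>i\<le>2 * n. qint q (1 + ?S i))
        = (\<Prod>i<length w. qint q (1 + ?S i)) * qint q (1 + ?S (length w))"
      using True by (simp add: lessThan_Suc_atMost[symmetric])
    then show ?thesis
      using True S by (simp add: Cat_def cat_w qint_1[OF c])
  next
    case False
    have "cat q n w = 0"
    proof (rule ccontr)
      assume nonzero: "cat q n w \<noteq> 0"
      then have "length w = 2 * n" "?S (length w) = 0"
        using cat_w by (auto split: if_splits)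
      moreover have "\<forall>i<length w. 0 \<le> ?S i"
        using paths_nonzero_imp_nonneg[of 0 q] nonzero by (simp add: cat_def)
      ultimately have "catalan w \<and> length w = 2 * n"
        unfolding catalan_def by auto
      with False show False ..
    qed
    moreover have "(catalan w \<and> length w = 2 * n) = False"
      using False by simp
    ultimately show ?thesis
      unfolding Cat_def by (simp only: if_False)
  qed
qed

lemma conc_wd_letter_left: "conc (wd [a]) f = prep a f"
proof
  fix w
  have "wd [a] (take i w) * f (drop i w) = (if i = 1 then prep a f w else 0)" if "i \<le> length w" for i
    using that by (cases w; cases i) (auto simp: wd_def prep_def)
  then have "conc (wd [a]) f w = (\<Sum>i\<le>length w. if i = 1 then prep a f w else 0)"
    unfolding conc_def by (intro sum.cong) auto
  also have "\<dots> = prep a f w"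
    by (cases w) (auto simp: Suc_le_eq)
  finally show "conc (wd [a]) f w = prep a f w" .
qed

lemma conc_wd_letter_right:
  "conc f (wd [b]) w = (if w \<noteq> [] \<and> last w = b then f (butlast w) else 0)"
proof (cases w rule: rev_cases)
  case Nil
  then show ?thesis by (simp add: conc_def wd_def)
next
  case (snoc v a)
  have "f (take i (v @ [a])) * wd [b] (drop i (v @ [a])) = (if i = length v \<and> a = b then f v else 0)"
    if "i \<le> length (v @ [a])" for i
  proof (cases "i \<le> length v")
    case True
    then have "(drop i v @ [a] = [b]) = (i = length v \<and> a = b)"
      by (cases "drop i v") auto
    with True show ?thesis
      by (auto simp: wd_def)
  next
    case False
    with that have "i = length v + 1"
      by simp
    then show ?thesis
      by (simp add: wd_def)
  qed
  then have "conc f (wd [b]) w = (\<Sum>i\<le>length (v @ [a]). if i = length v \<and> a = b then f v else 0)"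
    unfolding conc_def snoc by (intro sum.cong) auto
  then show ?thesis
    using snoc by simp
qed

lemma conc_prep_wd: "conc (prep a f) (wd [b]) = prep a (conc f (wd [b]))"
proof
  fix w
  show "conc (prep a f) (wd [b]) w = prep a (conc f (wd [b])) w"
    by (cases w rule: remdups_adj.cases) (simp_all add: conc_wd_letter_right)
qed

lemma conc_cat_Y:
  assumes c: "(q::'a::field) - inverse q \<noteq> 0"
  shows "conc (cat q n) (wd [Y]) = cat_y q n"
proof
  fix w
  show "conc (cat q n) (wd [Y]) w = cat_y q n w"
  proof (cases w rule: rev_cases)
    case Nil
    then show ?thesis by (simp add: conc_wd_letter_right cat_y_def)
  next
    case (snoc v a)
    have "cat_y q n w = paths q 1 0 (-1 - bar a) (2 * n) v * qint q (-1 - bar a + 1)"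
      unfolding cat_y_def snoc using paths_snoc[of q 1 0 "-1" "2 * n" v a] by simp
    also have "\<dots> = (if a = Y then cat q n v else 0)"
      by (cases a) (simp_all add: cat_def qint_1[OF c] paths_below_zero_weight)
    finally show ?thesis
      using snoc by (simp add: conc_wd_letter_right)
  qed
qed

definition commutator :: "'a::field \<Rightarrow> 'a vec \<Rightarrow> 'a vec \<Rightarrow> 'a vec" where
  "commutator q f g = (\<lambda>w. star q f g w - star q g f w)"

lemma commutator_antisym: "commutator q g f w = - commutator q f g w"
  by (simp add: commutator_def)

lemma wd_XY_via_star:
  fixes q :: "'a::field"
  assumes q: "q \<noteq> 0"
  shows "(q^4 - 1) * wd [X, Y] w = q^4 * star q (wd [X]) (wd [Y]) w - q^2 * star q (wd [Y]) (wd [X]) w"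
proof -
  have xy: "star q (wd [X]) (wd [Y]) w = wd [X, Y] w + inverse (q^2) * wd [Y, X] w"
    and yx: "star q (wd [Y]) (wd [X]) w = wd [Y, X] w + inverse (q^2) * wd [X, Y] w"
    unfolding star_wd_wd by (auto simp: prep_def wd_def bform_def power_int_minus split: list.splits)
  show ?thesis
    unfolding xy yx using q by (simp add: field_simps)
qed

lemma commutator_xy_via_q_commutators:
  fixes q \<alpha> :: "'a::field"
  assumes q: "q \<noteq> 0" and F: "finite (supp F)" "homogeneous F d"
  defines "P \<equiv> \<lambda>v. \<alpha> * star q (wd [X]) F v - star q F (wd [X]) v"
    and "R \<equiv> \<lambda>v. \<alpha> * star q F (wd [Y]) v - star q (wd [Y]) F v"
  shows "q^2 * ((q^2 * \<alpha> * star q (wd [X]) R w - star q R (wd [X]) w)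
            - (q^2 * \<alpha> * star q P (wd [Y]) w - star q (wd [Y]) P w))
    = \<alpha> * (q^4 - 1) * commutator q F (wd [X, Y]) w"
proof -
  let ?x = "wd [X] :: 'a vec" and ?y = "wd [Y] :: 'a vec"
  have hx: "homogeneous ?x 1" and hy: "homogeneous ?y (-1)"
    by (simp_all add: homogeneous_wdI)
  note assoc = star_assoc[OF q]
  have "star q ?x R w = \<alpha> * star q ?x (star q F ?y) w - star q ?x (star q ?y F) w"
    and "star q P ?y w = \<alpha> * star q ?x (star q F ?y) w - star q F (star q ?x ?y) w"
    and "star q R ?x w = \<alpha> * star q F (star q ?y ?x) w - star q ?y (star q F ?x) w"
    and "star q ?y P w = \<alpha> * star q ?y (star q ?x F) w - star q ?y (star q F ?x) w"
    unfolding P_def R_def using F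
    by (simp_all add: star_diff_left star_diff_right star_scale_left star_scale_right
        assoc[OF _ _ _ F(2) hx] assoc[OF _ _ _ hx F(2)] assoc[OF _ _ _ F(2) hy] assoc[OF _ _ _ hy F(2)])
  moreover have "(q^4 - 1) * star q F (wd [X, Y]) w
      = q^4 * star q F (star q ?x ?y) w - q^2 * star q F (star q ?y ?x) w"
  proof -
    have "(q^4 - 1) * star q F (wd [X, Y]) w = star q F (\<lambda>v. (q^4 - 1) * wd [X, Y] v) w"
      using F by (simp add: star_scale_right)
    also have "\<dots> = star q F (\<lambda>v. q^4 * star q ?x ?y v - q^2 * star q ?y ?x v) w"
      by (simp only: wd_XY_via_star[OF q])
    finally show ?thesis
      using F by (simp add: star_diff_right star_scale_right)
  qed
  moreover have "(q^4 - 1) * star q (wd [X, Y]) F w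
      = q^4 * star q ?x (star q ?y F) w - q^2 * star q ?y (star q ?x F) w"
  proof -
    have "(q^4 - 1) * star q (wd [X, Y]) F w = star q (\<lambda>v. (q^4 - 1) * wd [X, Y] v) F w"
      using F by (simp add: star_scale_left)
    also have "\<dots> = star q (\<lambda>v. q^4 * star q ?x ?y v - q^2 * star q ?y ?x v) F w"
      by (simp only: wd_XY_via_star[OF q])
    finally show ?thesis
      using F by (simp add: star_diff_left star_scale_left assoc[OF _ _ _ hx hy] assoc[OF _ _ _ hy hx])
  qed
  ultimately show ?thesis
    unfolding commutator_def by algebra
qed

lemma finite_supp_commutator [simp]:
  "finite (supp f) \<Longrightarrow> finite (supp g) \<Longrightarrow> finite (supp (commutator q f g))"
  by (simp add: commutator_def)

lemma commutator_scale_left: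
  "finite (supp f) \<Longrightarrow> finite (supp g) \<Longrightarrow> commutator q (\<lambda>v. a * f v) g w = a * commutator q f g w"
  by (simp add: commutator_def star_scale_left star_scale_right algebra_simps)

lemma commutator_scale_right:
  "finite (supp f) \<Longrightarrow> finite (supp g) \<Longrightarrow> commutator q f (\<lambda>v. a * g v) w = a * commutator q f g w"
  by (simp add: commutator_def star_scale_left star_scale_right algebra_simps)

lemma commutator_zero_right [simp]: "commutator q f (\<lambda>v. 0) w = 0"
  by (simp add: commutator_def)

lemma commutator_jacobi:
  fixes q :: "'a::field"
  assumes q: "q \<noteq> 0"
    and fin: "finite (supp A)" "finite (supp B)" "finite (supp C)"
    and hom: "homogeneous A dA" "homogeneous B dB" "homogeneous C dC"
  shows "commutator q (commutator q A B) C w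
    = commutator q (commutator q A C) B w + commutator q A (commutator q B C) w"
proof -
  note assoc = star_assoc[OF q]
  have ABC: "commutator q (commutator q A B) C w
      = star q A (star q B C) w - star q B (star q A C) w - (star q C (star q A B) w - star q C (star q B A) w)"
    unfolding commutator_def using fin
    by (simp add: star_diff_left star_diff_right assoc[OF _ _ _ hom(1,2)] assoc[OF _ _ _ hom(2,1)])
  have ACB: "commutator q (commutator q A C) B w
      = star q A (star q C B) w - star q C (star q A B) w - (star q B (star q A C) w - star q B (star q C A) w)"
    unfolding commutator_def using fin
    by (simp add: star_diff_left star_diff_right assoc[OF _ _ _ hom(1,3)] assoc[OF _ _ _ hom(3,1)])
  have A_BC: "commutator q A (commutator q B C) w
      = star q A (star q B C) w - star q A (star q C B) w - (star q B (star q C A) w - star q C (star q B A) w)"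
    unfolding commutator_def using fin
    by (simp add: star_diff_left star_diff_right assoc[OF _ _ _ hom(2,3)] assoc[OF _ _ _ hom(3,2)])
  show ?thesis
    unfolding ABC ACB A_BC by (simp add: algebra_simps)
qed

section \<open>The commutator identities\<close>

context
  fixes q :: "'a::field"
  assumes q: "q \<noteq> 0" and q4: "q^4 \<noteq> 1"
begin

lemma q_minus_inverse_nonzero: "q - inverse q \<noteq> 0"
proof
  assume "q - inverse q = 0"
  then have "q^2 = 1"
    using q by (simp add: field_simps power2_eq_square)
  then have "q^4 = 1"
    by (metis power2_eq_square one_power2 power_mult numeral_Bit0 mult_2)
  with q4 show False ..
qed

lemma x_star_cat_y:
  "q^2 * star q (wd [X]) (cat_y q k) w - star q (cat_y q k) (wd [X]) w = (q - inverse q) * cat q (Suc k) w"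
proof -
  have "q^4 * (q powi (-1))^2 * (q powi 0)^2 = q^2"
    and "(q - inverse q) * q^2 * (q powi (-1))^2 = q - inverse q"
    using q by (simp_all add: power_int_minus field_simps)
  with x_star_paths[OF q q_minus_inverse_nonzero, of "-1" 0 "2 * k + 1" w] show ?thesis
    by (simp add: cat_y_def cat_def qint_1[OF q_minus_inverse_nonzero] paths_Suc_at_zero_weight)
qed

lemma x_star_cat:
  "q^4 * star q (wd [X]) (cat q l) w - star q (cat q l) (wd [X]) w
    = (q - inverse q) * q^2 * qint q 2 * paths q 1 0 1 (2 * l + 1) w"
  using x_star_paths[OF q q_minus_inverse_nonzero, of 0 0 "2 * l" w]
  by (simp add: cat_def paths_Suc_at_zero_weight)

lemma cat_star_y:
  "q^4 * star q (cat q l) (wd [Y]) w - star q (wd [Y]) (cat q l) w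
    = (q - inverse q) * q^2 * paths q 1 1 0 (2 * l + 1) w"
  using paths_star_y[OF q q_minus_inverse_nonzero, of 0 0 "2 * l" w] paths_shift[of q 1 0 "-1" "2 * l + 1" w]
  by (simp add: cat_def qint_1[OF q_minus_inverse_nonzero])

lemma cat_y_star_y:
  "q^2 * star q (cat_y q k) (wd [Y]) w - star q (wd [Y]) (cat_y q k) w
    = (q - inverse q) * q^2 * paths q 1 1 (-1) (2 * k + 2) w"
proof -
  have "q^4 * (q powi (-1))^2 * (q powi 0)^2 = q^2"
    using q by (simp add: power_int_minus field_simps)
  with paths_star_y[OF q q_minus_inverse_nonzero, of "-1" 0 "2 * k + 1" w]
    paths_shift[of q 1 0 "-2" "2 * k + 2" w]
  show ?thesis
    by (simp add: cat_y_def qint_1[OF q_minus_inverse_nonzero] paths_below_zero_weight)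
qed

lemma commutator_x_x_cat_y:
  "commutator q (wd [X]) (x_cat_y q k) = (\<lambda>w. (q - inverse q) * x_cat q (Suc k) w)"
proof
  fix w
  show "commutator q (wd [X]) (x_cat_y q k) w = (q - inverse q) * x_cat q (Suc k) w"
  proof (cases w)
    case Nil
    then show ?thesis by (simp add: commutator_def star_apply_Nil x_cat_apply x_cat_y_apply)
  next
    case (Cons a v)
    then show ?thesis
      using x_star_cat_y[of k v]
      by (cases a) (simp_all add: commutator_def star_apply_Cons_simps algebra_simps)
  qed
qed

lemma commutator_x_cat_y_y:
  "commutator q (x_cat_y q k) (wd [Y]) = (\<lambda>w. (q - inverse q) * cat_y q (Suc k) w)"
proof
  fix w
  show "commutator q (x_cat_y q k) (wd [Y]) w = (q - inverse q) * cat_y q (Suc k) w"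
  proof (cases w)
    case Nil
    then show ?thesis by (simp add: commutator_def star_apply_Nil x_cat_y_apply cat_y_def)
  next
    case (Cons a v)
    show ?thesis
    proof (cases a)
      case X
      have "commutator q (x_cat_y q k) (wd [Y]) (X # v)
          = star q (cat_y q k) (wd [Y]) v - inverse (q^2) * star q (wd [Y]) (cat_y q k) v"
        by (simp add: commutator_def star_apply_Cons_simps power_int_minus)
      also have "\<dots>
          = inverse (q^2) * (q^2 * star q (cat_y q k) (wd [Y]) v - star q (wd [Y]) (cat_y q k) v)"
        using q by (simp add: field_simps)
      also have "\<dots> = (q - inverse q) * paths q 1 1 (-1) (2 * k + 2) v"
        unfolding cat_y_star_y using q by simp
      also have "\<dots> = (q - inverse q) * cat_y q (Suc k) (X # v)"
        by (simp add: cat_y_def qint_1[OF q_minus_inverse_nonzero])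
      finally show ?thesis
        using Cons X by simp
    next
      case Y
      then show ?thesis
        using Cons by (simp add: commutator_def star_apply_Cons_simps cat_y_def paths_Suc_at_zero_weight)
    qed
  qed
qed

lemma x_cat_star_y:
  "q^2 * star q (x_cat q l) (wd [Y]) w - star q (wd [Y]) (x_cat q l) w = (q - inverse q) * cat q (Suc l) w"
proof (cases w)
  case Nil
  then show ?thesis by (simp add: star_apply_Nil x_cat_apply cat_def)
next
  case (Cons a v)
  show ?thesis
  proof (cases a)
    case X
    have "q^2 * star q (x_cat q l) (wd [Y]) (X # v) - star q (wd [Y]) (x_cat q l) (X # v)
        = q^2 * star q (cat q l) (wd [Y]) v - inverse (q^2) * star q (wd [Y]) (cat q l) v"
      by (simp add: star_apply_Cons_simps power_int_minus)
    also have "\<dots> = inverse (q^2) * (q^4 * star q (cat q l) (wd [Y]) v - star q (wd [Y]) (cat q l) v)"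
      using q by (simp add: field_simps)
    also have "\<dots> = (q - inverse q) * paths q 1 1 0 (2 * l + 1) v"
      unfolding cat_star_y using q by simp
    also have "\<dots> = (q - inverse q) * cat q (Suc l) (X # v)"
      by (simp add: cat_def qint_1[OF q_minus_inverse_nonzero])
    finally show ?thesis
      using Cons X by simp
  next
    case Y
    then show ?thesis
      using Cons q by (simp add: star_apply_Cons_simps cat_def paths_Suc_at_zero_weight power_int_minus)
  qed
qed

text \<open>With [\<alpha> = q^4] both q-commutators of [C_l] are multiples of path sums whose
  q-commutators with [x] and with [y] are proportional to one and the same vector, so the
  left-hand side of [commutator_xy_via_q_commutators] vanishes.\<close>

lemma cat_commutes_xy: "commutator q (cat q l) (wd [X, Y]) w = 0"
proof -
  let ?x = "wd [X] :: 'a vec" and ?y = "wd [Y] :: 'a vec"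
  let ?T10 = "paths q 1 1 0 (2 * l + 1)" and ?T01 = "paths q 1 0 1 (2 * l + 1)"
  let ?D = "paths q 2 0 0 (2 * l + 2) w - paths q 1 0 0 (2 * l + 2) w"
  have P: "(\<lambda>v. q^4 * star q ?x (cat q l) v - star q (cat q l) ?x v)
      = (\<lambda>v. (q - inverse q) * q^2 * qint q 2 * ?T01 v)"
    using x_star_cat by simp
  have R: "(\<lambda>v. q^4 * star q (cat q l) ?y v - star q ?y (cat q l) v)
      = (\<lambda>v. (q - inverse q) * q^2 * ?T10 v)"
    using cat_star_y by simp
  have x_T10: "q^2 * q^4 * star q ?x ?T10 w - star q ?T10 ?x w = (q - inverse q) * q^2 * qint q 2 * ?D"
    using x_star_paths[OF q q_minus_inverse_nonzero, of 0 1 "2 * l + 1" w]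
      paths_shift[of q 1 0 0 "2 * l + 2" w] paths_shift[of q 0 0 0 "2 * l + 2" w]
    by (simp add: algebra_simps)
  have T01_y: "q^2 * q^4 * star q ?T01 ?y w - star q ?y ?T01 w = (q - inverse q) * q^2 * ?D"
    using paths_star_y[OF q q_minus_inverse_nonzero, of 1 0 "2 * l + 1" w]
    by (simp add: qint_1[OF q_minus_inverse_nonzero] algebra_simps)
  have "q^4 * ((q^4 - 1) * commutator q (cat q l) (wd [X, Y]) w)
      = q^2 * ((q^2 * q^4 * star q ?x (\<lambda>v. q^4 * star q (cat q l) ?y v - star q ?y (cat q l) v) w
              - star q (\<lambda>v. q^4 * star q (cat q l) ?y v - star q ?y (cat q l) v) ?x w)
            - (q^2 * q^4 * star q (\<lambda>v. q^4 * star q ?x (cat q l) v - star q (cat q l) ?x v) ?y w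
              - star q ?y (\<lambda>v. q^4 * star q ?x (cat q l) v - star q (cat q l) ?x v) w))"
    using commutator_xy_via_q_commutators[OF q finite_supp_cat(1) homogeneous_cat(1),
        where \<alpha> = "q^4" and w = w]
    by (simp add: algebra_simps)
  also have "\<dots> = q^2 * ((q - inverse q) * q^2 * (q^2 * q^4 * star q ?x ?T10 w - star q ?T10 ?x w)
      - (q - inverse q) * q^2 * qint q 2 * (q^2 * q^4 * star q ?T01 ?y w - star q ?y ?T01 w))"
    unfolding P R
    by (simp only: star_scale_left star_scale_right finite_supp_paths finite_supp_wd simp_thms)
      (simp add: algebra_simps)
  also have "\<dots> = 0"
    unfolding x_T10 T01_y by (simp add: algebra_simps)
  finally show ?thesis
    using q q4 by simp
qed

lemma commutator_x_cat_xy: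
  "commutator q (x_cat q l) (wd [X, Y]) = (\<lambda>w. (q - inverse q) * x_cat q (Suc l) w)"
proof
  fix w
  show "commutator q (x_cat q l) (wd [X, Y]) w = (q - inverse q) * x_cat q (Suc l) w"
  proof (cases w)
    case Nil
    then show ?thesis by (simp add: commutator_def star_apply_Nil x_cat_apply)
  next
    case (Cons a v)
    then show ?thesis
      using cat_commutes_xy[of l v] x_cat_star_y[of l v]
      by (cases a) (simp_all add: commutator_def star_apply_Cons_simps algebra_simps)
  qed
qed

lemma q4_minus_1_eq_qint_2: "(q - inverse q) * q^2 * qint q 2 = q^4 - 1"
  using qint_mult_diff[OF q_minus_inverse_nonzero, of 2] q by (simp add: field_simps)

lemma commutator_xy_cat_y:
  "commutator q (wd [X, Y]) (cat_y q l) = (\<lambda>w. (q - inverse q) * cat_y q (Suc l) w)"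
proof
  fix w
  let ?x = "wd [X] :: 'a vec" and ?y = "wd [Y] :: 'a vec" and ?Cy = "cat_y q l"
  let ?T = "paths q 1 1 (-1) (2 * l + 2)" and ?T' = "paths q 1 1 0 (Suc (2 * l + 2))"
  let ?c = "q - inverse q"
  have P: "(\<lambda>v. q^2 * star q ?x ?Cy v - star q ?Cy ?x v) = (\<lambda>v. ?c * cat q (Suc l) v)"
    using x_star_cat_y by simp
  have R: "(\<lambda>v. q^2 * star q ?Cy ?y v - star q ?y ?Cy v) = (\<lambda>v. ?c * q^2 * ?T v)"
    using cat_y_star_y by simp
  have x_T: "q^4 * star q ?x ?T w - star q ?T ?x w = ?c * (?T' w - qint q 2 * cat_y q (Suc l) w)"
  proof -
    have k1: "q^4 * (q powi (-1))^2 * (q powi 1)^2 = q^4" and k2: "?c * q^2 * (q powi (-1))^2 = ?c"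
      using q by (simp_all add: power_int_minus field_simps)
    have "q^4 * star q ?x ?T w - star q ?T ?x w
        = ?c * (qint q 1 * ?T' w - qint q 2 * paths q 0 1 0 (Suc (2 * l + 2)) w)"
      using x_star_paths[OF q q_minus_inverse_nonzero, of "-1" 1 "2 * l + 2" w] unfolding k1 k2 by simp
    then show ?thesis
      using paths_shift[of q 0 0 "-1" "Suc (2 * l + 2)" w]
      by (simp add: cat_y_def qint_1[OF q_minus_inverse_nonzero])
  qed
  have C_y: "q^4 * star q (cat q (Suc l)) ?y w - star q ?y (cat q (Suc l)) w = ?c * q^2 * ?T' w"
    using cat_star_y[of "Suc l" w] by simp
  have "q^2 * ((q^4 - 1) * commutator q ?Cy (wd [X, Y]) w)
      = q^2 * ((q^2 * q^2 * star q ?x (\<lambda>v. q^2 * star q ?Cy ?y v - star q ?y ?Cy v) w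
              - star q (\<lambda>v. q^2 * star q ?Cy ?y v - star q ?y ?Cy v) ?x w)
            - (q^2 * q^2 * star q (\<lambda>v. q^2 * star q ?x ?Cy v - star q ?Cy ?x v) ?y w
              - star q ?y (\<lambda>v. q^2 * star q ?x ?Cy v - star q ?Cy ?x v) w))"
    using commutator_xy_via_q_commutators[OF q finite_supp_cat(2) homogeneous_cat(2),
        where \<alpha> = "q^2" and w = w]
    by (simp add: algebra_simps)
  also have "\<dots> = q^2 * (?c * q^2 * (q^4 * star q ?x ?T w - star q ?T ?x w)
      - ?c * (q^4 * star q (cat q (Suc l)) ?y w - star q ?y (cat q (Suc l)) w))"
    unfolding P R
    by (simp only: star_scale_left star_scale_right finite_supp_paths finite_supp_cat finite_supp_wd
        simp_thms) (simp add: algebra_simps)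
  also have "\<dots> = q^2 * ((q^4 - 1) * - (?c * cat_y q (Suc l) w))"
    unfolding x_T C_y q4_minus_1_eq_qint_2[symmetric] by (simp add: algebra_simps)
  finally have "commutator q ?Cy (wd [X, Y]) w = - (?c * cat_y q (Suc l) w)"
    using q q4 by (simp only: mult_left_cancel power_not_zero right_minus_eq simp_thms)
  then show "commutator q (wd [X, Y]) ?Cy w = ?c * cat_y q (Suc l) w"
    by (simp add: commutator_antisym[of q "wd [X, Y]"])
qed

lemma commutator_xy_x_cat_y: "commutator q (wd [X, Y]) (x_cat_y q k) = (\<lambda>w. 0)"
proof
  fix w
  show "commutator q (wd [X, Y]) (x_cat_y q k) w = 0"
  proof (cases w)
    case Nil
    then show ?thesis by (simp add: commutator_def star_apply_Nil x_cat_y_apply)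
  next
    case (Cons a v)
    show ?thesis
    proof (cases a)
      case X
      have "star q (x_cat_y q k) (wd [Y]) v - star q (wd [Y]) (x_cat_y q k) v
          = star q (wd [X, Y]) (cat_y q k) v - star q (cat_y q k) (wd [X, Y]) v"
        using fun_cong[OF commutator_x_cat_y_y, of k v] fun_cong[OF commutator_xy_cat_y, of k v]
        by (simp add: commutator_def)
      then show ?thesis
        using Cons X by (simp add: commutator_def star_apply_Cons_simps field_simps)
    next
      case Y
      then show ?thesis
        using Cons by (simp add: commutator_def star_apply_Cons_simps)
    qed
  qed
qed

lemma commutator_x_cat_x_cat_y:
  "commutator q (x_cat q l) (x_cat_y q k) = (\<lambda>w. (q - inverse q) * x_cat q (k + l + 1) w)"
proof (induction l)
  case 0
  show ?case
    using commutator_x_x_cat_y by (simp add: x_cat_0)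
next
  case (Suc l)
  let ?c = "q - inverse q" and ?xy = "wd [X, Y] :: 'a vec"
  have c: "?c \<noteq> 0"
    by (rule q_minus_inverse_nonzero)
  have x_cat_Suc: "x_cat q (Suc l) = (\<lambda>w. inverse ?c * commutator q (x_cat q l) ?xy w)"
    unfolding commutator_x_cat_xy using c by (simp add: mult.assoc[symmetric])
  show ?case
  proof
    fix w
    have "commutator q (x_cat q (Suc l)) (x_cat_y q k) w
        = inverse ?c * commutator q (commutator q (x_cat q l) ?xy) (x_cat_y q k) w"
      unfolding x_cat_Suc by (simp add: commutator_scale_left)
    also have "commutator q (commutator q (x_cat q l) ?xy) (x_cat_y q k) w
        = commutator q (commutator q (x_cat q l) (x_cat_y q k)) ?xy w
          + commutator q (x_cat q l) (commutator q ?xy (x_cat_y q k)) w"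
      by (rule commutator_jacobi[OF q _ _ _ homogeneous_cat(3) homogeneous_wd homogeneous_cat(4)]) simp_all
    also have "\<dots> = ?c * (?c * x_cat q (k + l + 2) w)"
      unfolding Suc.IH commutator_xy_x_cat_y
      by (simp add: commutator_scale_left commutator_x_cat_xy)
    finally show "commutator q (x_cat q (Suc l)) (x_cat_y q k) w = ?c * x_cat q (k + Suc l + 1) w"
      using c by simp
  qed
qed

lemma commutator_x_cat_y_cat_y:
  "commutator q (x_cat_y q k) (cat_y q l) = (\<lambda>w. (q - inverse q) * cat_y q (k + l + 1) w)"
proof (induction l)
  case 0
  show ?case
    using commutator_x_cat_y_y by (simp add: cat_y_0[OF q_minus_inverse_nonzero])
next
  case (Suc l)
  let ?c = "q - inverse q" and ?xy = "wd [X, Y] :: 'a vec"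
  have c: "?c \<noteq> 0"
    by (rule q_minus_inverse_nonzero)
  have cat_y_Suc: "cat_y q (Suc l) = (\<lambda>w. inverse ?c * commutator q ?xy (cat_y q l) w)"
    unfolding commutator_xy_cat_y using c by (simp add: mult.assoc[symmetric])
  show ?case
  proof
    fix w
    have "commutator q (x_cat_y q k) (cat_y q (Suc l)) w
        = inverse ?c * commutator q (x_cat_y q k) (commutator q ?xy (cat_y q l)) w"
      unfolding cat_y_Suc by (simp add: commutator_scale_right)
    also have "commutator q (x_cat_y q k) (commutator q ?xy (cat_y q l)) w
        = - commutator q (commutator q (x_cat_y q k) (cat_y q l)) ?xy w"
    proof -
      have "commutator q (x_cat_y q k) ?xy = (\<lambda>v. 0)"
        using commutator_xy_x_cat_y by (simp add: commutator_def fun_eq_iff)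
      then have "0 = commutator q (commutator q (x_cat_y q k) ?xy) (cat_y q l) w"
        by (simp add: commutator_def)
      also have "\<dots> = commutator q (commutator q (x_cat_y q k) (cat_y q l)) ?xy w
          + commutator q (x_cat_y q k) (commutator q ?xy (cat_y q l)) w"
        by (rule commutator_jacobi[OF q _ _ _ homogeneous_cat(4) homogeneous_wd homogeneous_cat(2)])
          simp_all
      finally show ?thesis
        by (simp add: eq_neg_iff_add_eq_0 add.commute)
    qed
    also have "\<dots> = ?c * (?c * cat_y q (k + l + 2) w)"
      unfolding Suc.IH
      by (simp add: commutator_scale_left commutator_scale_right commutator_antisym[of q _ ?xy]
          commutator_xy_cat_y)
    finally show "commutator q (x_cat_y q k) (cat_y q (Suc l)) w = ?c * cat_y q (k + Suc l + 1) w"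
      using c by simp
  qed
qed

end

theorem corollary8p5:
  fixes q :: "'a::field_char_0" and k l :: nat
  assumes "q \<noteq> 0" and "\<forall>n::nat. n > 0 \<longrightarrow> q ^ n \<noteq> 1"
  shows "conc (wd [X]) (Cat q (k + l + 1)) =
           (\<lambda>w. (star q (conc (wd [X]) (Cat q l)) (conc (conc (wd [X]) (Cat q k)) (wd [Y])) w
                 - star q (conc (conc (wd [X]) (Cat q k)) (wd [Y])) (conc (wd [X]) (Cat q l)) w)
                / (q - inverse q))
     \<and> conc (Cat q (k + l + 1)) (wd [Y]) =
           (\<lambda>w. (star q (conc (conc (wd [X]) (Cat q k)) (wd [Y])) (conc (Cat q l) (wd [Y])) w
                 - star q (conc (Cat q l) (wd [Y])) (conc (conc (wd [X]) (Cat q k)) (wd [Y])) w)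
                / (q - inverse q))"
proof -
  have q4: "q^4 \<noteq> 1"
    using assms(2) by simp \<comment> \<open>the only consequence of the root-of-unity hypothesis used\<close>
  have c: "q - inverse q \<noteq> 0"
    by (rule q_minus_inverse_nonzero[OF assms(1) q4])
  have x_Cat: "conc (wd [X]) (Cat q n) = x_cat q n" for n
    by (simp add: Cat_eq_cat[OF c] conc_wd_letter_left x_cat_def)
  have x_Cat_y: "conc (conc (wd [X]) (Cat q n)) (wd [Y]) = x_cat_y q n" for n
    by (simp add: Cat_eq_cat[OF c] conc_wd_letter_left conc_prep_wd conc_cat_Y[OF c] x_cat_y_def)
  have Cat_y: "conc (Cat q n) (wd [Y]) = cat_y q n" for n
    by (simp add: Cat_eq_cat[OF c] conc_cat_Y[OF c])
  show ?thesis
    unfolding x_Cat_y unfolding x_Cat Cat_y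
    using commutator_x_cat_x_cat_y[OF assms(1) q4, of l k]
      commutator_x_cat_y_cat_y[OF assms(1) q4, of k l] c
    by (simp add: commutator_def fun_eq_iff)
qed

end
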